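(* Let $A$ be a finite set with $|A|\ge 2$, $n\ge 2$, and let $\mathcal{I}\subseteq\mathrm{Sym}(A^n)$ be the set of instructions. Then the set of permutations $f\in\mathrm{Sym}(A^n)$ such that $f^{-1}gf\in\mathcal{I}$ for every $g\in\mathcal{I}$ is exactly the group $U$ of unary permutations of $A^n$, which equals $\mathrm{Sym}(A)\wr\mathrm{Sym}(n)$. In other words, $U$ is the largest subgroup of $\mathrm{Sym}(A^n)$ acting on $\mathcal{I}$ by conjugation.
   Context: Any $f\in\mathrm{Sym}(A^n)$ is written $f(x)=(f_1(x),\ldots,f_n(x))$ with coordinate functions $f_i:A^n\to A$; the $i$-th coordinate function is trivial if $f_i(x)=x_i$ for all $x$. An instruction is a permutation of $A^n$ with at most one nontrivial coordinate function (the identity counts as an instruction). A permutation $f$ of $A^n$ is unary if each coordinate function $f_i$ depends on at most one variable. The wreath product $\mathrm{Sym}(A)\wr\mathrm{Sym}(n)$ acts on $A^n$ by permuting coordinates and applying permutations of $A$ independently in each coordinate. *)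

theory Defs
  imports "HOL-Library.FuncSet" "HOL-Combinatorics.Permutations"
begin

text \<open>The cube A^n: tuples are functions nat => 'a, with coordinates 0..n-1 in A
  and value undefined outside (PiE).\<close>
definition cube :: "'a set \<Rightarrow> nat \<Rightarrow> (nat \<Rightarrow> 'a) set" where
  "cube A n = PiE {..<n} (\<lambda>_. A)"

definition sym_cube :: "'a set \<Rightarrow> nat \<Rightarrow> ((nat \<Rightarrow> 'a) \<Rightarrow> (nat \<Rightarrow> 'a)) set" where
  "sym_cube A n = {f. f permutes cube A n}"

definition instructions :: "'a set \<Rightarrow> nat \<Rightarrow> ((nat \<Rightarrow> 'a) \<Rightarrow> (nat \<Rightarrow> 'a)) set" where
  "instructions A n = {g \<in> sym_cube A n.
     card {i \<in> {..<n}. \<not> (\<forall>x \<in> cube A n. g x i = x i)} \<le> 1}"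

definition unary_perms :: "'a set \<Rightarrow> nat \<Rightarrow> ((nat \<Rightarrow> 'a) \<Rightarrow> (nat \<Rightarrow> 'a)) set" where
  "unary_perms A n = {f \<in> sym_cube A n. \<forall>i<n. \<exists>j<n.
     \<forall>x \<in> cube A n. \<forall>y \<in> cube A n. x j = y j \<longrightarrow> f x i = f y i}"

definition wreath_perms :: "'a set \<Rightarrow> nat \<Rightarrow> ((nat \<Rightarrow> 'a) \<Rightarrow> (nat \<Rightarrow> 'a)) set" where
  "wreath_perms A n = {f. \<exists>\<pi> \<sigma>. \<pi> permutes {..<n} \<and> (\<forall>i<n. \<sigma> i permutes A) \<and>
     (\<forall>x. f x = (if x \<in> cube A n
                   then (\<lambda>i. if i < n then \<sigma> i (x (\<pi> i)) else undefined)
                   else x))}"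

end

theory Submission
  imports Defs
begin

text \<open>
  An element of the wreath product permutes the coordinates by some \<pi> and acts
  coordinatewise, so it conjugates an instruction changing coordinate i into one changing
  coordinate \<pi> i. A unary permutation reads each output coordinate i from one input
  coordinate \<pi> i; being injective it must read every input coordinate, so \<pi> is a permutation
  and the permutation is in the wreath product.

  Conversely, let f normalise the instructions; since these are finitely many, also
  f \<circ> h \<circ> inv f is an instruction for every instruction h. If {x, y} and {x', y'} are
  disjoint pairs of distinct points on lines in direction m (points differing only in
  coordinate m), the double transposition (x y)(x' y') is an instruction, hence so is its
  conjugate (f x f y)(f x' f y'): the images of both pairs differ in the same single
  coordinate. As n \<ge> 2, every such pair is disjoint from one of two fixed reference pairs, so
  moving along direction m changes only the output coordinate \<rho> m. Since f is onto, no output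
  coordinate is constant, so \<rho> is a permutation and output coordinate \<rho> m depends on input
  coordinate m alone.
\<close>

definition agree_off :: "nat \<Rightarrow> nat \<Rightarrow> (nat \<Rightarrow> 'a) \<Rightarrow> (nat \<Rightarrow> 'a) \<Rightarrow> bool" where
  "agree_off n m x y \<longleftrightarrow> (\<forall>l<n. l \<noteq> m \<longrightarrow> x l = y l)"

lemma agree_off_refl [simp]: "agree_off n m x x"
  by (simp add: agree_off_def)

lemma agree_off_sym: "agree_off n m x y \<Longrightarrow> agree_off n m y x"
  by (simp add: agree_off_def)

lemma agree_off_trans: "agree_off n m x y \<Longrightarrow> agree_off n m y z \<Longrightarrow> agree_off n m x z"
  by (simp add: agree_off_def)

lemma agree_off_transpose: "agree_off n m x y \<Longrightarrow> agree_off n m (transpose x y z) z"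
  by (simp add: agree_off_def transpose_def)

lemma mem_cube_iff: "x \<in> cube A n \<longleftrightarrow> (\<forall>k<n. x k \<in> A) \<and> (\<forall>k\<ge>n. x k = undefined)"
  unfolding cube_def by (auto simp: PiE_def extensional_def)

lemma cube_fun_upd: "x \<in> cube A n \<Longrightarrow> a \<in> A \<Longrightarrow> k < n \<Longrightarrow> x(k := a) \<in> cube A n"
  by (simp add: mem_cube_iff)

lemma finite_cube: "finite A \<Longrightarrow> finite (cube A n)"
  unfolding cube_def by (simp add: finite_PiE)

lemma cube_nonempty: "A \<noteq> {} \<Longrightarrow> cube A n \<noteq> {}"
  unfolding cube_def by (simp add: PiE_eq_empty_iff)

lemma cube_eqI: "x \<in> cube A n \<Longrightarrow> y \<in> cube A n \<Longrightarrow> (\<And>k. k < n \<Longrightarrow> x k = y k) \<Longrightarrow> x = y"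
  unfolding cube_def by (rule PiE_ext) auto

lemma agree_off_unique:
  assumes "x \<in> cube A n" "y \<in> cube A n" "x \<noteq> y"
    and "agree_off n k x y" "agree_off n k' x y"
  shows "k = k'"
proof (rule ccontr)
  assume "k \<noteq> k'"
  then have "x l = y l" if "l < n" for l
    using assms(4,5) that by (cases "l = k") (auto simp: agree_off_def)
  then show False
    using cube_eqI assms(1-3) by blast
qed

lemma eq_if_constant_on_lines:
  assumes const: "\<And>m x y. m < n \<Longrightarrow> m \<notin> J \<Longrightarrow> x \<in> cube A n \<Longrightarrow> y \<in> cube A n \<Longrightarrow>
      agree_off n m x y \<Longrightarrow> \<phi> x = \<phi> y"
    and x: "x \<in> cube A n" and y: "y \<in> cube A n" and J: "\<forall>l\<in>J. x l = y l"
  shows "\<phi> x = \<phi> y"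
proof -
  define z where "z t = (\<lambda>k. if k < t then y k else x k)" for t
  have z_cube: "z t \<in> cube A n" for t
    using x y by (auto simp: mem_cube_iff z_def)
  have "\<phi> (z t) = \<phi> x" if "t \<le> n" for t
    using that
  proof (induction t)
    case (Suc t)
    have "\<phi> (z (Suc t)) = \<phi> (z t)"
    proof (cases "t \<in> J")
      case True
      then have "z (Suc t) = z t"
        using J by (auto simp: z_def fun_eq_iff less_Suc_eq)
      then show ?thesis by simp
    next
      case False
      moreover have "agree_off n t (z (Suc t)) (z t)"
        by (auto simp: agree_off_def z_def less_Suc_eq)
      ultimately show ?thesis
        using Suc.prems const[of t "z (Suc t)" "z t"] z_cube by simp
    qed
    then show ?case using Suc by simp
  qed (simp add: z_def)
  moreover have "z n = y"
    using x y by (auto simp: z_def fun_eq_iff mem_cube_iff)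
  ultimately show ?thesis by auto
qed

lemma exists_other_value:
  assumes "card A \<ge> 2" "x \<in> cube A n" "k < n"
  shows "\<exists>b \<in> A. b \<noteq> x k"
proof -
  have "card (A - {x k}) > 0"
    using assms by (simp add: card_Diff_singleton_if mem_cube_iff)
  then have "A - {x k} \<noteq> {}"
    by (metis card.empty less_irrefl)
  then show ?thesis
    by blast
qed

lemma instructions_iff:
  "g \<in> instructions A n \<longleftrightarrow>
     g permutes cube A n \<and> (\<exists>m. \<forall>z \<in> cube A n. agree_off n m (g z) z)"
proof -
  define N where "N = {i \<in> {..<n}. \<not> (\<forall>x \<in> cube A n. g x i = x i)}"
  have "card N \<le> 1 \<longleftrightarrow> (\<exists>m. N \<subseteq> {m})"
  proof
    assume "card N \<le> 1"
    then have "\<forall>i\<in>N. \<forall>j\<in>N. i = j"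
      using card_le_Suc0_iff_eq[of N] by (simp add: N_def)
    then show "\<exists>m. N \<subseteq> {m}" by blast
  next
    assume "\<exists>m. N \<subseteq> {m}"
    then obtain m where "N \<subseteq> {m}" ..
    then show "card N \<le> 1"
      using card_mono[of "{m}" N] by simp
  qed
  moreover have "N \<subseteq> {m} \<longleftrightarrow> (\<forall>z \<in> cube A n. agree_off n m (g z) z)" for m
    by (auto simp: N_def agree_off_def)
  ultimately show ?thesis
    by (simp add: instructions_def sym_cube_def N_def)
qed

lemma finite_instructions: "finite A \<Longrightarrow> finite (instructions A n)"
  by (rule finite_subset[OF _ finite_permutations[OF finite_cube]])
    (auto simp: instructions_iff)

lemma wreath_permsE:
  assumes fin: "finite A" and f: "f \<in> wreath_perms A n"
  obtains \<pi> \<sigma> where "\<pi> permutes {..<n}" and "\<And>i. i < n \<Longrightarrow> \<sigma> i permutes A"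
    and "\<And>x i. x \<in> cube A n \<Longrightarrow> i < n \<Longrightarrow> f x i = \<sigma> i (x (\<pi> i))"
    and "f permutes cube A n"
proof -
  obtain \<pi> \<sigma> where \<pi>: "\<pi> permutes {..<n}" and \<sigma>: "\<And>i. i < n \<Longrightarrow> \<sigma> i permutes A"
    and f_eq: "\<And>x. f x = (if x \<in> cube A n
                   then (\<lambda>i. if i < n then \<sigma> i (x (\<pi> i)) else undefined) else x)"
    using f unfolding wreath_perms_def by blast
  have coord: "f x i = \<sigma> i (x (\<pi> i))" if "x \<in> cube A n" "i < n" for x i
    using that f_eq by simp
  have "f ` cube A n \<subseteq> cube A n"
    using f_eq permutes_in_image[OF \<pi>] permutes_in_image[OF \<sigma>] by (auto simp: mem_cube_iff)
  moreover have "inj_on f (cube A n)"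
  proof (rule inj_onI)
    fix x y assume x: "x \<in> cube A n" and y: "y \<in> cube A n" and "f x = f y"
    then have "x (\<pi> i) = y (\<pi> i)" if "i < n" for i
      using coord that permutes_inj[OF \<sigma>] by (metis inj_eq)
    then have "x k = y k" if "k < n" for k
      using permutes_image[OF \<pi>] that by (metis imageE lessThan_iff)
    then show "x = y"
      by (rule cube_eqI[OF x y])
  qed
  ultimately have "bij_betw f (cube A n) (cube A n)"
    using endo_inj_surj[OF finite_cube[OF fin]] by (simp add: bij_betw_def)
  then have "f permutes cube A n"
    by (rule bij_imp_permutes) (simp add: f_eq)
  with \<pi> \<sigma> coord that show ?thesis by blast
qed

lemma wreath_perms_subset_unary_perms:
  assumes "finite A"
  shows "wreath_perms A n \<subseteq> unary_perms A n"
proof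
  fix f assume "f \<in> wreath_perms A n"
  then obtain \<pi> \<sigma> where \<pi>: "\<pi> permutes {..<n}" and "\<And>i. i < n \<Longrightarrow> \<sigma> i permutes A"
    and coord: "\<And>x i. x \<in> cube A n \<Longrightarrow> i < n \<Longrightarrow> f x i = \<sigma> i (x (\<pi> i))"
    and perm: "f permutes cube A n"
    by (rule wreath_permsE[OF assms]) blast
  have "\<pi> i < n \<and> (\<forall>x\<in>cube A n. \<forall>y\<in>cube A n. x (\<pi> i) = y (\<pi> i) \<longrightarrow> f x i = f y i)"
    if "i < n" for i
    using that coord permutes_in_image[OF \<pi>] by simp
  with perm show "f \<in> unary_perms A n"
    unfolding unary_perms_def sym_cube_def by blast
qed

lemma permutes_cube_reads_every_coordinate:
  assumes two: "card A \<ge> 2" and perm: "f permutes cube A n"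
    and reads: "\<And>i x y. i < n \<Longrightarrow> x \<in> cube A n \<Longrightarrow> y \<in> cube A n \<Longrightarrow>
      x (\<pi> i) = y (\<pi> i) \<Longrightarrow> f x i = f y i"
  shows "{..<n} \<subseteq> \<pi> ` {..<n}"
proof
  fix k assume "k \<in> {..<n}"
  then have k: "k < n"
    by simp
  show "k \<in> \<pi> ` {..<n}"
  proof (rule ccontr)
    assume unread: "k \<notin> \<pi> ` {..<n}"
    obtain c where c: "c \<in> cube A n"
      using cube_nonempty[of A n] two by fastforce
    obtain b where b: "b \<in> A" "b \<noteq> c k"
      using exists_other_value[OF two c k] by blast
    have c': "c(k := b) \<in> cube A n"
      using cube_fun_upd[OF c b(1) k] .
    have "f (c(k := b)) = f c"
    proof (rule cube_eqI)
      show "f (c(k := b)) \<in> cube A n" "f c \<in> cube A n"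
        using permutes_in_image[OF perm] c c' by auto
      fix i assume "i < n"
      moreover have "\<pi> i \<noteq> k"
        using unread \<open>i < n\<close> by auto
      ultimately show "f (c(k := b)) i = f c i"
        using reads[of i "c(k := b)" c] c c' by simp
    qed
    then have "c(k := b) = c"
      using permutes_inj[OF perm] by (simp add: inj_eq)
    then show False
      using b by (metis fun_upd_same)
  qed
qed

lemma permutes_cube_coordinate_nonconstant:
  assumes two: "card A \<ge> 2" and perm: "f permutes cube A n" and k: "k < n"
  shows "\<exists>x \<in> cube A n. \<exists>y \<in> cube A n. f x k \<noteq> f y k"
proof -
  obtain c where c: "c \<in> cube A n"
    using cube_nonempty[of A n] two by fastforce
  obtain b where b: "b \<in> A" "b \<noteq> c k"
    using exists_other_value[OF two c k] by blast
  have "c(k := b) \<in> cube A n"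
    using cube_fun_upd[OF c b(1) k] .
  moreover have "f (inv f c) k \<noteq> f (inv f (c(k := b))) k"
    using b by (simp add: permutes_inverses(1)[OF perm])
  ultimately show ?thesis
    using c permutes_in_image[OF permutes_inv[OF perm]] by blast
qed

lemma coordinate_section_permutes:
  assumes fin: "finite A" and perm: "f permutes cube A n" and i: "i < n" and j: "j < n"
    and c: "c \<in> cube A n"
    and reads: "\<And>x y. x \<in> cube A n \<Longrightarrow> y \<in> cube A n \<Longrightarrow> x j = y j \<Longrightarrow> f x i = f y i"
  shows "(\<lambda>a. if a \<in> A then f (c(j := a)) i else a) permutes A"
proof -
  let ?\<sigma> = "\<lambda>a. if a \<in> A then f (c(j := a)) i else a"
  have maps: "?\<sigma> ` A \<subseteq> A"
  proof
    fix b assume "b \<in> ?\<sigma> ` A"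
    then obtain a where a: "a \<in> A" and b: "b = f (c(j := a)) i"
      by auto
    have "f (c(j := a)) \<in> cube A n"
      using permutes_in_image[OF perm] cube_fun_upd[OF c a j] by simp
    with b i show "b \<in> A"
      by (simp add: mem_cube_iff)
  qed
  have onto: "A \<subseteq> ?\<sigma> ` A"
  proof
    fix b assume b: "b \<in> A"
    define x where "x = inv f (c(i := b))"
    have x: "x \<in> cube A n" and fx: "f x = c(i := b)"
      using permutes_in_image[OF permutes_inv[OF perm]] permutes_inverses(1)[OF perm]
        cube_fun_upd[OF c b i] by (auto simp: x_def)
    have xj: "x j \<in> A"
      using x j by (simp add: mem_cube_iff)
    then have "f (c(j := x j)) i = f x i"
      using reads[of "c(j := x j)" x] cube_fun_upd[OF c _ j] x by simp
    then show "b \<in> ?\<sigma> ` A"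
      using fx xj by force
  qed
  have "bij_betw ?\<sigma> A A"
    using finite_surj_inj[OF fin onto] maps onto by (auto simp: bij_betw_def)
  then show ?thesis
    by (rule bij_imp_permutes) simp
qed

lemma unary_permE:
  assumes two: "card A \<ge> 2" and f: "f \<in> unary_perms A n"
  obtains \<pi> where "\<pi> permutes {..<n}"
    and "\<And>i x y. i < n \<Longrightarrow> x \<in> cube A n \<Longrightarrow> y \<in> cube A n \<Longrightarrow>
      x (\<pi> i) = y (\<pi> i) \<Longrightarrow> f x i = f y i"
proof -
  have perm: "f permutes cube A n"
    using f by (simp add: unary_perms_def sym_cube_def)
  from f have "\<forall>i\<in>{..<n}. \<exists>j. j < n \<and>
      (\<forall>x\<in>cube A n. \<forall>y\<in>cube A n. x j = y j \<longrightarrow> f x i = f y i)"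
    by (simp add: unary_perms_def)
  then obtain \<pi>\<^sub>0 where \<pi>\<^sub>0: "\<forall>i\<in>{..<n}. \<pi>\<^sub>0 i < n \<and>
      (\<forall>x\<in>cube A n. \<forall>y\<in>cube A n. x (\<pi>\<^sub>0 i) = y (\<pi>\<^sub>0 i) \<longrightarrow> f x i = f y i)"
    by (metis bchoice)
  define \<pi> where "\<pi> i = (if i < n then \<pi>\<^sub>0 i else i)" for i
  have reads: "f x i = f y i"
    if "i < n" "x \<in> cube A n" "y \<in> cube A n" "x (\<pi> i) = y (\<pi> i)" for i x y
  proof -
    have "x (\<pi>\<^sub>0 i) = y (\<pi>\<^sub>0 i)"
      using that by (simp add: \<pi>_def)
    with that \<pi>\<^sub>0 show ?thesis
      by blast
  qed
  have onto: "{..<n} \<subseteq> \<pi> ` {..<n}"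
    by (rule permutes_cube_reads_every_coordinate[OF two perm reads])
  moreover have "\<pi> ` {..<n} \<subseteq> {..<n}"
    using \<pi>\<^sub>0 unfolding \<pi>_def by force
  ultimately have "\<pi> permutes {..<n}"
    using finite_surj_inj[OF _ onto]
    by (intro bij_imp_permutes) (auto simp: bij_betw_def \<pi>_def)
  with reads that show ?thesis
    by blast
qed

lemma unary_perms_subset_wreath_perms:
  assumes fin: "finite A" and two: "card A \<ge> 2"
  shows "unary_perms A n \<subseteq> wreath_perms A n"
proof
  fix f assume f: "f \<in> unary_perms A n"
  then have perm: "f permutes cube A n"
    by (simp add: unary_perms_def sym_cube_def)
  obtain \<pi> where \<pi>: "\<pi> permutes {..<n}"
    and reads: "\<And>i x y. i < n \<Longrightarrow> x \<in> cube A n \<Longrightarrow> y \<in> cube A n \<Longrightarrow>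
      x (\<pi> i) = y (\<pi> i) \<Longrightarrow> f x i = f y i"
    by (rule unary_permE[OF two f]) blast
  have \<pi>_less: "\<pi> i < n" if "i < n" for i
    using permutes_in_image[OF \<pi>] that by simp
  obtain c where c: "c \<in> cube A n"
    using cube_nonempty[of A n] two by fastforce
  define \<sigma> where "\<sigma> i = (\<lambda>a. if a \<in> A then f (c(\<pi> i := a)) i else a)" for i
  have \<sigma>_perm: "\<sigma> i permutes A" if "i < n" for i
    unfolding \<sigma>_def
    by (rule coordinate_section_permutes[OF fin perm that \<pi>_less[OF that] c reads[OF that]])
  have coord: "f x i = \<sigma> i (x (\<pi> i))" if x: "x \<in> cube A n" and i: "i < n" for x i
  proof -
    have "x (\<pi> i) \<in> A"
      using x \<pi>_less[OF i] by (simp add: mem_cube_iff)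
    then show ?thesis
      using reads[OF i x, of "c(\<pi> i := x (\<pi> i))"] cube_fun_upd[OF c _ \<pi>_less[OF i]]
      by (simp add: \<sigma>_def)
  qed
  have "f x = (if x \<in> cube A n
      then (\<lambda>i. if i < n then \<sigma> i (x (\<pi> i)) else undefined) else x)" for x
  proof (cases "x \<in> cube A n")
    case True
    moreover have "f x \<in> cube A n"
      using True permutes_in_image[OF perm] by simp
    ultimately show ?thesis
      using coord[OF True] by (auto simp: fun_eq_iff mem_cube_iff)
  next
    case False
    then show ?thesis
      using permutes_not_in[OF perm] by auto
  qed
  with \<pi> \<sigma>_perm show "f \<in> wreath_perms A n"
    unfolding wreath_perms_def by blast
qed

lemma wreath_perm_conj_instruction:
  assumes fin: "finite A" and f: "f \<in> wreath_perms A n" and g: "g \<in> instructions A n"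
  shows "inv f \<circ> g \<circ> f \<in> instructions A n"
proof -
  obtain \<pi> \<sigma> where \<pi>: "\<pi> permutes {..<n}" and \<sigma>: "\<And>i. i < n \<Longrightarrow> \<sigma> i permutes A"
    and coord: "\<And>x i. x \<in> cube A n \<Longrightarrow> i < n \<Longrightarrow> f x i = \<sigma> i (x (\<pi> i))"
    and perm: "f permutes cube A n"
    by (rule wreath_permsE[OF fin f]) blast
  obtain m where g_perm: "g permutes cube A n"
    and g_moves: "\<And>z. z \<in> cube A n \<Longrightarrow> agree_off n m (g z) z"
    using g by (auto simp: instructions_iff)
  let ?h = "inv f \<circ> g \<circ> f"
  have h_perm: "?h permutes cube A n"
    by (intro permutes_compose perm g_perm permutes_inv)
  have "agree_off n (\<pi> m) (?h x) x" if x: "x \<in> cube A n" for x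
    unfolding agree_off_def
  proof (intro allI impI)
    fix l assume l: "l < n" "l \<noteq> \<pi> m"
    then obtain i where i: "i < n" "\<pi> i = l" "i \<noteq> m"
      using permutes_image[OF \<pi>] by (metis imageE lessThan_iff)
    have hx: "?h x \<in> cube A n" and fx: "f x \<in> cube A n"
      using x permutes_in_image[OF h_perm] permutes_in_image[OF perm] by auto
    have "\<sigma> i (?h x l) = f (?h x) i"
      using coord[OF hx i(1)] i(2) by simp
    also have "\<dots> = g (f x) i"
      by (simp add: permutes_inverses(1)[OF perm])
    also have "\<dots> = f x i"
      using g_moves[OF fx] i by (auto simp: agree_off_def)
    also have "\<dots> = \<sigma> i (x l)"
      using coord[OF x i(1)] i(2) by simp
    finally have "\<sigma> i (?h x l) = \<sigma> i (x l)" .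
    then show "?h x l = x l"
      using permutes_inj[OF \<sigma>[OF i(1)]] by (simp add: inj_eq)
  qed
  with h_perm show ?thesis
    by (auto simp: instructions_iff)
qed

lemma conj_inv_closed:
  assumes S: "finite S" and perm: "f permutes X"
    and closed: "\<And>g. g \<in> S \<Longrightarrow> inv f \<circ> g \<circ> f \<in> S" and h: "h \<in> S"
  shows "f \<circ> h \<circ> inv f \<in> S"
proof -
  define conj where "conj g = inv f \<circ> g \<circ> f" for g :: "'a \<Rightarrow> 'a"
  have undo: "f \<circ> conj g \<circ> inv f = g" for g
    by (simp add: conj_def fun_eq_iff permutes_inverses[OF perm])
  then have "inj_on conj S"
    by (metis inj_onI)
  moreover have "conj ` S \<subseteq> S"
    using closed by (auto simp: conj_def)
  ultimately have "conj ` S = S"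
    using endo_inj_surj[OF S] by blast
  then obtain g where "g \<in> S" "h = conj g"
    using h by force
  then show ?thesis
    using undo by simp
qed

lemma normaliser_double_transposition:
  assumes perm: "f permutes cube A n"
    and normalises: "\<And>h. h \<in> instructions A n \<Longrightarrow> f \<circ> h \<circ> inv f \<in> instructions A n"
    and cube: "x \<in> cube A n" "y \<in> cube A n" "x' \<in> cube A n" "y' \<in> cube A n"
    and lines: "agree_off n m x y" "agree_off n m x' y'"
    and distinct: "x \<noteq> y" "x' \<noteq> y'" "{x, y} \<inter> {x', y'} = {}"
  shows "\<exists>k. agree_off n k (f x) (f y) \<and> agree_off n k (f x') (f y')"
proof -
  let ?h = "transpose x y \<circ> transpose x' y'"
  have "?h permutes cube A n"
    using cube by (intro permutes_compose permutes_swap_id)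
  moreover have "agree_off n m (?h z) z" for z
    using lines agree_off_transpose agree_off_trans by (metis comp_apply)
  ultimately have "?h \<in> instructions A n"
    by (auto simp: instructions_iff)
  then have "f \<circ> ?h \<circ> inv f \<in> instructions A n"
    by (rule normalises)
  then obtain k where k: "\<And>z. z \<in> cube A n \<Longrightarrow> agree_off n k ((f \<circ> ?h \<circ> inv f) z) z"
    unfolding instructions_iff by blast
  have "?h x = y" "?h x' = y'"
    using distinct by (auto simp: transpose_def)
  then have "(f \<circ> ?h \<circ> inv f) (f x) = f y" "(f \<circ> ?h \<circ> inv f) (f x') = f y'"
    by (simp_all add: permutes_inverses(2)[OF perm])
  moreover have "f x \<in> cube A n" "f x' \<in> cube A n"
    using cube permutes_in_image[OF perm] by auto
  ultimately have "agree_off n k (f y) (f x)" "agree_off n k (f y') (f x')"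
    using k by metis+
  then show ?thesis
    using agree_off_sym by blast
qed

lemma normaliser_direction_transfer:
  assumes perm: "f permutes cube A n"
    and normalises: "\<And>h. h \<in> instructions A n \<Longrightarrow> f \<circ> h \<circ> inv f \<in> instructions A n"
    and ref: "p \<in> cube A n" "q \<in> cube A n" "agree_off n m p q" "p \<noteq> q"
      "agree_off n k (f p) (f q)"
    and xy: "x \<in> cube A n" "y \<in> cube A n" "agree_off n m x y" "x \<noteq> y"
      "{x, y} \<inter> {p, q} = {}"
  shows "agree_off n k (f x) (f y)"
proof -
  obtain k' where k'_xy: "agree_off n k' (f x) (f y)" and k'_pq: "agree_off n k' (f p) (f q)"
    using normaliser_double_transposition[OF perm normalises xy(1,2) ref(1,2) xy(3) ref(3)
        xy(4) ref(4) xy(5)] by blast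
  have "f p \<in> cube A n" "f q \<in> cube A n"
    using ref permutes_in_image[OF perm] by auto
  moreover have "f p \<noteq> f q"
    using ref(4) permutes_inj[OF perm] by (simp add: inj_eq)
  ultimately have "k' = k"
    using agree_off_unique k'_pq ref(5) by blast
  with k'_xy show ?thesis
    by simp
qed

lemma normaliser_line_direction:
  assumes two: "card A \<ge> 2" and n: "n \<ge> 2" and m: "m < n"
    and perm: "f permutes cube A n"
    and normalises: "\<And>h. h \<in> instructions A n \<Longrightarrow> f \<circ> h \<circ> inv f \<in> instructions A n"
  shows "\<exists>k. \<forall>x \<in> cube A n. \<forall>y \<in> cube A n. agree_off n m x y \<longrightarrow> agree_off n k (f x) (f y)"
proof -
  obtain c where c: "c \<in> cube A n"
    using cube_nonempty[of A n] two by fastforce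
  define m' where "m' = (if m = 0 then 1 else 0 :: nat)"
  have m': "m' < n" "m' \<noteq> m"
    using n by (auto simp: m'_def)
  obtain b where b: "b \<in> A" "b \<noteq> c m"
    using exists_other_value[OF two c m] by blast
  obtain b' where b': "b' \<in> A" "b' \<noteq> c m'"
    using exists_other_value[OF two c m'(1)] by blast
  define d where "d = c(m := b)"
  define u where "u = c(m' := b')"
  define v where "v = d(m' := b')"
  have cube: "d \<in> cube A n" "u \<in> cube A n" "v \<in> cube A n"
    using c b b' m m' by (simp_all add: d_def u_def v_def cube_fun_upd)
  have lines: "agree_off n m c d" "agree_off n m u v"
    using m' by (auto simp: agree_off_def d_def u_def v_def)
  have distinct: "c \<noteq> d" "u \<noteq> v"
    using b m' by (auto simp: d_def u_def v_def fun_eq_iff)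
  \<comment> \<open>the reference pairs {c, d} and {u, v} are separated by coordinate m', which is constant
    along m-lines; so every pair on an m-line misses one of them\<close>
  have coord_m': "c m' \<noteq> b'" "d m' = c m'" "u m' = b'" "v m' = b'"
    using b' m' by (auto simp: d_def u_def v_def)
  then have "{c, d} \<inter> {u, v} = {}"
    by force
  then obtain k where k: "agree_off n k (f c) (f d)" "agree_off n k (f u) (f v)"
    using normaliser_double_transposition[OF perm normalises c cube lines distinct] by blast
  have "agree_off n k (f x) (f y)"
    if xy: "x \<in> cube A n" "y \<in> cube A n" "agree_off n m x y" for x y
  proof (cases "x = y")
    case False
    have "x m' = y m'"
      using xy m' by (simp add: agree_off_def)
    then consider "{x, y} \<inter> {c, d} = {}" | "{x, y} \<inter> {u, v} = {}"
      using coord_m' by force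
    then show ?thesis
    proof cases
      case 1
      show ?thesis
        by (rule normaliser_direction_transfer[OF perm normalises c cube(1) lines(1)
              distinct(1) k(1) xy False 1])
    next
      case 2
      show ?thesis
        by (rule normaliser_direction_transfer[OF perm normalises cube(2,3) lines(2)
              distinct(2) k(2) xy False 2])
    qed
  qed simp
  then show ?thesis by blast
qed

lemma coordinate_determined_by_directions:
  assumes \<rho>: "\<And>m x y. m < n \<Longrightarrow> x \<in> cube A n \<Longrightarrow> y \<in> cube A n \<Longrightarrow>
      agree_off n m x y \<Longrightarrow> agree_off n (\<rho> m) (f x) (f y)"
    and i: "i < n" and x: "x \<in> cube A n" and y: "y \<in> cube A n"
    and agree: "\<forall>j<n. \<rho> j = i \<longrightarrow> x j = y j"
  shows "f x i = f y i"
proof (rule eq_if_constant_on_lines[where J = "{j. j < n \<and> \<rho> j = i}" and \<phi> = "\<lambda>x. f x i", OF _ x y])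
  fix m p q assume m: "m < n" "m \<notin> {j. j < n \<and> \<rho> j = i}"
    and pq: "p \<in> cube A n" "q \<in> cube A n" "agree_off n m p q"
  have "agree_off n (\<rho> m) (f p) (f q)"
    using \<rho>[OF m(1) pq] .
  with m i show "f p i = f q i"
    by (simp add: agree_off_def)
qed (use agree in blast)

lemma normaliser_subset_unary_perms:
  assumes fin: "finite A" and two: "card A \<ge> 2" and n: "n \<ge> 2"
    and f: "f \<in> sym_cube A n"
    and normalises: "\<forall>g \<in> instructions A n. inv f \<circ> g \<circ> f \<in> instructions A n"
  shows "f \<in> unary_perms A n"
proof -
  have perm: "f permutes cube A n"
    using f by (simp add: sym_cube_def)
  have normalises': "f \<circ> h \<circ> inv f \<in> instructions A n" if "h \<in> instructions A n" for h
    using conj_inv_closed[OF finite_instructions[OF fin] perm] normalises that by blast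
  have "\<forall>m\<in>{..<n}. \<exists>k. \<forall>x\<in>cube A n. \<forall>y\<in>cube A n.
      agree_off n m x y \<longrightarrow> agree_off n k (f x) (f y)"
    using normaliser_line_direction[OF two n _ perm normalises'] by blast
  then obtain \<rho> where "\<forall>m\<in>{..<n}. \<forall>x\<in>cube A n. \<forall>y\<in>cube A n.
      agree_off n m x y \<longrightarrow> agree_off n (\<rho> m) (f x) (f y)"
    by (metis bchoice)
  then have determined: "f x i = f y i"
    if "i < n" "x \<in> cube A n" "y \<in> cube A n" "\<forall>j<n. \<rho> j = i \<longrightarrow> x j = y j" for i x y
    using coordinate_determined_by_directions[of n A \<rho> f] that by blast
  have onto: "{..<n} \<subseteq> \<rho> ` {..<n}"
  proof
    fix k assume "k \<in> {..<n}"
    then have k: "k < n"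
      by simp
    show "k \<in> \<rho> ` {..<n}"
    proof (rule ccontr)
      assume "k \<notin> \<rho> ` {..<n}"
      then have "f x k = f y k" if "x \<in> cube A n" "y \<in> cube A n" for x y
        using determined[OF k that] by blast
      then show False
        using permutes_cube_coordinate_nonconstant[OF two perm k] by blast
    qed
  qed
  then have \<rho>_inj: "inj_on \<rho> {..<n}"
    using finite_surj_inj by blast
  have "\<exists>j<n. \<forall>x\<in>cube A n. \<forall>y\<in>cube A n. x j = y j \<longrightarrow> f x i = f y i"
    if "i < n" for i
  proof -
    obtain j where j: "j < n" "\<rho> j = i"
      using onto \<open>i < n\<close> by force
    with \<rho>_inj have "\<forall>j'<n. \<rho> j' = i \<longrightarrow> j' = j"
      by (auto simp: inj_on_def)
    with j determined \<open>i < n\<close> show ?thesis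
      by metis
  qed
  with f show ?thesis
    unfolding unary_perms_def by blast
qed

theorem proposition1:
  fixes A :: "'a set" and n :: nat
  assumes "finite A" and "card A \<ge> 2" and "n \<ge> 2"
  shows "{f \<in> sym_cube A n. \<forall>g \<in> instructions A n. inv f \<circ> g \<circ> f \<in> instructions A n}
           = unary_perms A n
         \<and> unary_perms A n = wreath_perms A n"
proof -
  have unary_eq_wreath: "unary_perms A n = wreath_perms A n"
    using wreath_perms_subset_unary_perms[OF assms(1)]
      unary_perms_subset_wreath_perms[OF assms(1,2)] by blast
  moreover have "unary_perms A n \<subseteq> sym_cube A n"
    by (auto simp: unary_perms_def)
  ultimately show ?thesis
    using normaliser_subset_unary_perms[OF assms] wreath_perm_conj_instruction[OF assms(1)]
    by blast
qed

end
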